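(* Suppose the access structure $\mathcal{A}\subseteq 2^P$ is connected and the polymatroid $\mathcal M=(f,sP)$ realizes $\mathcal{A}$. If $i\in P$ satisfies $f(i)=f(s)$, then $\mathcal M$ is tight at $i$, i.e. $f(sP)=f(sP\setminus\{i\})$.
   Context: A polymatroid $(f,M)$ consists of a finite set $M$ and a function $f$ on subsets of $M$ with $f(\emptyset)=0$ that is non-negative, monotone and submodular. It is tight at $i\in M$ if $f(M)=f(M\setminus\{i\})$. An access structure on a finite set $P$ is a non-empty upward-closed $\mathcal{A}\subseteq 2^P$ with $\emptyset\notin\mathcal{A}$. A participant $i$ is important if some $A\notin\mathcal{A}$ has $A\cup\{i\}\in\mathcal{A}$; $\mathcal{A}$ is connected if every participant is important. Let $s\notin P$; juxtaposition denotes union. A polymatroid $(f,sP)$ realizes $\mathcal{A}$ if for every $A\subseteq P$: $A\in\mathcal{A}$ iff $f(sA)=f(A)$, and $A\notin\mathcal{A}$ iff $f(sA)=f(A)+f(s)$. *)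

theory Defs
  imports Complex_Main
begin

definition polymatroid :: "('a set \<Rightarrow> real) \<Rightarrow> 'a set \<Rightarrow> bool" where
  "polymatroid f M \<longleftrightarrow> finite M \<and> f {} = 0 \<and>
     (\<forall>A. A \<subseteq> M \<longrightarrow> 0 \<le> f A) \<and>
     (\<forall>A B. A \<subseteq> B \<and> B \<subseteq> M \<longrightarrow> f A \<le> f B) \<and>
     (\<forall>A B. A \<subseteq> M \<and> B \<subseteq> M \<longrightarrow> f (A \<union> B) + f (A \<inter> B) \<le> f A + f B)"

definition tight_at :: "('a set \<Rightarrow> real) \<Rightarrow> 'a set \<Rightarrow> 'a \<Rightarrow> bool" where
  "tight_at f M i \<longleftrightarrow> f M = f (M - {i})"

definition access_structure :: "'a set \<Rightarrow> 'a set set \<Rightarrow> bool" where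
  "access_structure P Acc \<longleftrightarrow> finite P \<and> Acc \<subseteq> Pow P \<and> Acc \<noteq> {} \<and> {} \<notin> Acc \<and>
     (\<forall>A B. A \<in> Acc \<and> A \<subseteq> B \<and> B \<subseteq> P \<longrightarrow> B \<in> Acc)"

definition important :: "'a set \<Rightarrow> 'a set set \<Rightarrow> 'a \<Rightarrow> bool" where
  "important P Acc i \<longleftrightarrow> (\<exists>A. A \<subseteq> P \<and> A \<notin> Acc \<and> insert i A \<in> Acc)"

definition connected_access :: "'a set \<Rightarrow> 'a set set \<Rightarrow> bool" where
  "connected_access P Acc \<longleftrightarrow> (\<forall>i\<in>P. important P Acc i)"

definition realizes :: "('a set \<Rightarrow> real) \<Rightarrow> 'a \<Rightarrow> 'a set \<Rightarrow> 'a set set \<Rightarrow> bool" where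
  "realizes f s P Acc \<longleftrightarrow> (\<forall>A. A \<subseteq> P \<longrightarrow>
      (A \<in> Acc \<longleftrightarrow> f (insert s A) = f A) \<and>
      (A \<notin> Acc \<longleftrightarrow> f (insert s A) = f A + f {s}))"

end

theory Submission
  imports Defs
begin

text \<open>Since i is important, some unqualified A becomes qualified by adding i. Then
  f(sAi) = f(Ai) \<le> f(A) + f(i) = f(A) + f(s) = f(sA), so i is redundant over sA, and by
  submodularity an element redundant over some subset is redundant over the whole ground set.\<close>

lemma polymatroid_submodular:
  "polymatroid f M \<Longrightarrow> A \<subseteq> M \<Longrightarrow> B \<subseteq> M \<Longrightarrow> f (A \<union> B) + f (A \<inter> B) \<le> f A + f B"
  unfolding polymatroid_def by auto

lemma polymatroid_insert_le:
  assumes pm: "polymatroid f M" and "A \<subseteq> M" "i \<in> M"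
  shows "f (insert i A) \<le> f A + f {i}"
proof -
  have "f (A \<union> {i}) + f (A \<inter> {i}) \<le> f A + f {i}"
    using polymatroid_submodular[OF pm, of A "{i}"] assms(2,3) by blast
  moreover have "0 \<le> f (A \<inter> {i})"
    using pm assms(2) unfolding polymatroid_def by (meson Int_lower1 order_trans)
  ultimately show ?thesis by simp
qed

lemma polymatroid_tight_at_if_redundant:
  assumes pm: "polymatroid f M" and "C \<subseteq> M" "i \<in> M" "i \<notin> C"
    and redundant: "f (insert i C) \<le> f C"
  shows "tight_at f M i"
proof -
  have "f ((M - {i}) \<union> insert i C) + f ((M - {i}) \<inter> insert i C)
      \<le> f (M - {i}) + f (insert i C)"
    using polymatroid_submodular[OF pm, of "M - {i}" "insert i C"] assms(2,3) by blast
  moreover have "(M - {i}) \<union> insert i C = M" "(M - {i}) \<inter> insert i C = C"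
    using assms(2,3,4) by auto
  ultimately have "f M + f C \<le> f (M - {i}) + f (insert i C)"
    by simp
  moreover have "f (M - {i}) \<le> f M"
    using pm unfolding polymatroid_def by auto
  ultimately show ?thesis
    unfolding tight_at_def using redundant by linarith
qed

theorem corollary2p3:
  fixes f :: "'a set \<Rightarrow> real" and s i :: 'a and P :: "'a set" and Acc :: "'a set set"
  assumes "s \<notin> P"
    and "access_structure P Acc"
    and "connected_access P Acc"
    and "polymatroid f (insert s P)"
    and "realizes f s P Acc"
    and "i \<in> P"
    and "f {i} = f {s}"
  shows "tight_at f (insert s P) i"
proof -
  obtain A where A: "A \<subseteq> P" "A \<notin> Acc" "insert i A \<in> Acc"
    using assms(3,6) unfolding connected_access_def important_def by blast
  then have "i \<notin> A" by (metis insert_absorb)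
  have "f (insert s (insert i A)) = f (insert i A)"
    using assms(5,6) A unfolding realizes_def by simp
  also have "\<dots> \<le> f A + f {i}"
    using polymatroid_insert_le[OF assms(4), of A i] A assms(6) by auto
  also have "\<dots> = f (insert s A)"
    using assms(5,7) A unfolding realizes_def by metis
  finally have "f (insert i (insert s A)) \<le> f (insert s A)"
    by (simp add: insert_commute)
  moreover have "insert s A \<subseteq> insert s P" "i \<notin> insert s A"
    using A \<open>i \<notin> A\<close> assms(1,6) by auto
  ultimately show ?thesis
    using polymatroid_tight_at_if_redundant[OF assms(4)] assms(6) by blast
qed

end
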